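(* For every path $P$ on at least $4$ vertices, $4\le\pi_T(P)\le 5$.
   Context: A sequence is nonrepetitive if no block of consecutive terms has the form $r_1\dots r_nr_1\dots r_n$ with $n\ge1$. A (strong) total Thue colouring of a graph $G$ is a colouring of $V(G)\cup E(G)$ such that for every path $v_1,e_1,v_2,\dots,e_{k-1},v_k$ in $G$ the sequence of colours of $v_1,e_1,\dots,v_k$ is nonrepetitive, the sequence of colours of $v_1,\dots,v_k$ is nonrepetitive, and the sequence of colours of $e_1,\dots,e_{k-1}$ is nonrepetitive. $\pi_T(G)$ is the minimum number of colours in a total Thue colouring of $G$. *)

theory Defs
  imports Main
begin

definition nonrep :: "'c list \<Rightarrow> bool" where
  "nonrep s \<longleftrightarrow> \<not> (\<exists>xs r ys. r \<noteq> [] \<and> s = xs @ r @ r @ ys)"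

definition is_path :: "'v set \<Rightarrow> 'v set set \<Rightarrow> 'v list \<Rightarrow> bool" where
  "is_path V E vs \<longleftrightarrow> vs \<noteq> [] \<and> distinct vs \<and> set vs \<subseteq> V \<and>
     (\<forall>i. Suc i < length vs \<longrightarrow> {vs ! i, vs ! Suc i} \<in> E)"

definition path_edges :: "'v list \<Rightarrow> 'v set list" where
  "path_edges vs = map2 (\<lambda>a b. {a, b}) vs (tl vs)"

fun total_seq :: "('v \<Rightarrow> 'c) \<Rightarrow> ('v set \<Rightarrow> 'c) \<Rightarrow> 'v list \<Rightarrow> 'c list" where
  "total_seq cv ce [] = []"
| "total_seq cv ce [v] = [cv v]"
| "total_seq cv ce (v # w # vs) = cv v # ce {v, w} # total_seq cv ce (w # vs)"

text \<open>A (strong) total Thue colouring with at most k colours (colours 0..k-1):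
  vertices coloured by cv, edges by ce.\<close>
definition total_thue :: "'v set \<Rightarrow> 'v set set \<Rightarrow> ('v \<Rightarrow> nat) \<Rightarrow> ('v set \<Rightarrow> nat) \<Rightarrow> nat \<Rightarrow> bool" where
  "total_thue V E cv ce k \<longleftrightarrow>
     (\<forall>v\<in>V. cv v < k) \<and> (\<forall>e\<in>E. ce e < k) \<and>
     (\<forall>vs. is_path V E vs \<longrightarrow>
        nonrep (total_seq cv ce vs) \<and> nonrep (map cv vs) \<and> nonrep (map ce (path_edges vs)))"

definition total_thue_number :: "'v set \<Rightarrow> 'v set set \<Rightarrow> nat" where
  "total_thue_number V E = (LEAST k. \<exists>cv ce. total_thue V E cv ce k)"

definition path_V :: "nat \<Rightarrow> nat set" where
  "path_V n = {0..<n}"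

definition path_E :: "nat \<Rightarrow> nat set set" where
  "path_E n = {{i, Suc i} | i. Suc i < n}"

end

theory Submission
  imports Defs
begin

text \<open>The upper bound colours the vertices by Thue's square-free ternary word derived from the
  overlap-free Thue--Morse sequence, and the edges by a recoding of it into five colours. The
  interleaving of the two words is again square-free: a square of even length halves to a square
  of one of them, and a square of odd length would align vertex colours with edge colours in a way
  the recoding forbids. A path of a path graph is an interval traversed in one of the two
  directions, so its three colour sequences are factors of these words or of their reversals.
  The lower bound is an exhaustive check of the \<open>3\<^sup>7\<close> colourings of a path on four vertices.\<close>

fun thue_morse :: "nat \<Rightarrow> bool" where
  "thue_morse 0 = False"
| "thue_morse (Suc n) = (thue_morse (Suc n div 2) \<noteq> odd (Suc n))"

lemma thue_morse_div2: "thue_morse m = (thue_morse (m div 2) \<noteq> odd m)"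
  by (cases m) simp_all

declare thue_morse.simps(2) [simp del]

lemma thue_morse_even_Suc: "even m \<Longrightarrow> thue_morse (Suc m) = (\<not> thue_morse m)"
  by (metis thue_morse_div2 even_Suc even_Suc_div_two)

lemma thue_morse_add_double: "thue_morse (i + 2*k) = (thue_morse (i div 2 + k) \<noteq> odd i)"
  using thue_morse_div2[of "i + 2*k"] by (simp add: add.commute)

lemma thue_morse_overlap_halve:
  assumes "\<forall>j\<le>2*q. thue_morse (i+j) = thue_morse (i+2*q+j)"
  shows "\<forall>l\<le>q. thue_morse (i div 2 + l) = thue_morse (i div 2 + q + l)"
proof (intro allI impI)
  fix l assume "l \<le> q"
  have "thue_morse (i + 2*l) = thue_morse (i + 2*(q+l))"
    using assms[rule_format, of "2*l"] \<open>l \<le> q\<close> by (simp add: add.assoc)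
  thus "thue_morse (i div 2 + l) = thue_morse (i div 2 + q + l)"
    unfolding thue_morse_add_double add.assoc by blast
qed

lemma thue_morse_no_odd_overlap:
  assumes "odd p" and eq: "\<forall>j\<le>p. thue_morse (i+j) = thue_morse (i+p+j)"
  shows False
proof -
  have step: "thue_morse (Suc (i+j)) = (\<not> thue_morse (i+j))" if "j < p" for j
  proof (cases "even (i+j)")
    case True thus ?thesis by (rule thue_morse_even_Suc)
  next
    case False
    hence "thue_morse (Suc (i+p+j)) = (\<not> thue_morse (i+p+j))"
      using \<open>odd p\<close> by (intro thue_morse_even_Suc) simp
    thus ?thesis using eq[rule_format, of j] eq[rule_format, of "Suc j"] that by simp
  qed
  have "j \<le> p \<Longrightarrow> thue_morse (i+j) = (thue_morse i \<noteq> odd j)" for j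
    by (induction j) (simp_all add: step)
  from this[of p] eq[rule_format, of 0] \<open>odd p\<close> show False by simp
qed

lemma thue_morse_overlap_free: "0 < p \<Longrightarrow> \<exists>j\<le>p. thue_morse (i+j) \<noteq> thue_morse (i+p+j)"
proof (induction p arbitrary: i rule: less_induct)
  case (less p)
  show ?case
  proof (rule ccontr)
    assume "\<not> ?case"
    hence eq: "\<forall>j\<le>p. thue_morse (i+j) = thue_morse (i+p+j)" by simp
    show False
    proof (cases "even p")
      case True
      then obtain q where p: "p = 2*q" by blast
      with eq have "\<forall>l\<le>q. thue_morse (i div 2 + l) = thue_morse (i div 2 + q + l)"
        by (intro thue_morse_overlap_halve) simp
      moreover have "0 < q" "q < p" using less.prems p by simp_all
      ultimately show False using less.IH by fastforce
    next
      case False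
      thus False using thue_morse_no_odd_overlap eq by blast
    qed
  qed
qed

definition square_free_seq :: "(nat \<Rightarrow> 'a) \<Rightarrow> bool" where
  "square_free_seq f \<longleftrightarrow> (\<forall>i p. 0 < p \<longrightarrow> (\<exists>j<p. f (i+j) \<noteq> f (i+p+j)))"

lemma square_free_seqI:
  "(\<And>i p. 0 < p \<Longrightarrow> \<forall>j<p. f (i+j) = f (i+p+j) \<Longrightarrow> False) \<Longrightarrow> square_free_seq f"
  unfolding square_free_seq_def by blast

lemma square_free_seqD: "square_free_seq f \<Longrightarrow> 0 < p \<Longrightarrow> \<exists>j<p. f (i+j) \<noteq> f (i+p+j)"
  unfolding square_free_seq_def by blast

lemma square_free_seq_reflect:
  assumes "square_free_seq f" and "\<And>m m'. g m = g m' \<Longrightarrow> f m = f m'"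
  shows "square_free_seq g"
  using assms unfolding square_free_seq_def by metis

lemma nonrep_map_upt:
  assumes "square_free_seq f"
  shows "nonrep (map f [a..<b])"
  unfolding nonrep_def
proof (intro notI, elim exE conjE)
  fix xs r ys assume "r \<noteq> []" and split: "map f [a..<b] = xs @ r @ r @ ys"
  let ?i = "a + length xs" and ?p = "length r"
  have "f (?i + j) = f (?i + ?p + j)" if "j < ?p" for j
  proof -
    have len: "b - a = length xs + 2 * ?p + length ys"
      using arg_cong[OF split, of length] by simp
    have "map f [a..<b] ! (length xs + j) = map f [a..<b] ! (length xs + ?p + j)"
      using that by (simp add: split nth_append)
    thus ?thesis using that len by (simp add: add.assoc)
  qed
  with square_free_seqD[OF assms, of ?p ?i] \<open>r \<noteq> []\<close> show False by auto
qed

text \<open>Writing \<open>t\<close> for \<open>thue_morse\<close>: colour \<open>1\<close> records \<open>t m = t (m+1)\<close>, otherwise the colour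
  tells which of the two is set. Hence equal colours at \<open>m\<close> and \<open>m'\<close> carry agreement of
  \<open>t m, t m'\<close> over to \<open>t (m+1), t (m'+1)\<close>, and disagreement forces \<open>t\<close> to stay constant.\<close>
definition vertex_colour :: "nat \<Rightarrow> nat" where
  "vertex_colour m =
     (if thue_morse m = thue_morse (Suc m) then 1 else if thue_morse m then 0 else 2)"

lemma vertex_colour_le: "vertex_colour m \<le> 2"
  by (simp add: vertex_colour_def)

lemma vertex_colour_zero_Suc: "vertex_colour m = 0 \<Longrightarrow> vertex_colour (Suc m) \<noteq> 0"
  by (auto simp: vertex_colour_def split: if_splits)

lemma square_free_vertex_colour: "square_free_seq vertex_colour"
proof (rule square_free_seqI)
  fix i p :: nat assume "0 < p" and eq: "\<forall>j<p. vertex_colour (i+j) = vertex_colour (i+p+j)"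
  show False
  proof (cases "thue_morse i = thue_morse (i+p)")
    case True
    have "j \<le> p \<Longrightarrow> thue_morse (i+j) = thue_morse (i+p+j)" for j
    proof (induction j)
      case (Suc j)
      with eq[rule_format, of j] show ?case by (auto simp: vertex_colour_def split: if_splits)
    qed (simp add: True)
    thus False using thue_morse_overlap_free[OF \<open>0 < p\<close>, of i] by blast
  next
    case False
    have "j \<le> p \<Longrightarrow>
        thue_morse (i+j) = thue_morse i \<and> thue_morse (i+p+j) = thue_morse (i+p)" for j
    proof (induction j)
      case (Suc j)
      with eq[rule_format, of j] False show ?case by (auto simp: vertex_colour_def split: if_splits)
    qed simp
    from this[of p] False show False by simp
  qed
qed

text \<open>An edge colour in \<open>{3, 4}\<close> determines the colour of the vertex before it; an edge colour
  in \<open>{1, 2}\<close> only occurs after a vertex of colour \<open>0\<close> and differs from the vertex after it.\<close>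
definition edge_colour :: "nat \<Rightarrow> nat" where
  "edge_colour m =
     (if vertex_colour m = 0 then 3 - vertex_colour (Suc m) else vertex_colour m + 2)"

lemma edge_colour_low:
  assumes "vertex_colour m = 0"
  shows "1 \<le> edge_colour m" "edge_colour m \<le> 2" "edge_colour m \<noteq> vertex_colour (Suc m)"
  using assms vertex_colour_zero_Suc[of m] vertex_colour_le[of "Suc m"]
  by (simp_all add: edge_colour_def) arith+

lemma edge_colour_high: "vertex_colour m \<noteq> 0 \<Longrightarrow> 3 \<le> edge_colour m"
  by (simp add: edge_colour_def)

lemma edge_colour_less: "edge_colour m < 5"
  using vertex_colour_le[of m] by (auto simp: edge_colour_def)

lemma square_free_edge_colour: "square_free_seq edge_colour"
proof (rule square_free_seq_reflect[OF square_free_vertex_colour])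
  fix m m' assume "edge_colour m = edge_colour m'"
  thus "vertex_colour m = vertex_colour m'"
    using edge_colour_low[of m] edge_colour_low[of m'] edge_colour_high[of m]
      edge_colour_high[of m'] by (cases "vertex_colour m = 0"; cases "vertex_colour m' = 0") (auto simp: edge_colour_def)
qed

definition total_colour :: "nat \<Rightarrow> nat" where
  "total_colour k = (if even k then vertex_colour (k div 2) else edge_colour (k div 2))"

lemma total_colour_Suc_neq: "total_colour (Suc k) \<noteq> total_colour k"
  using edge_colour_low[of "k div 2"] edge_colour_high[of "k div 2"]
    vertex_colour_le[of "k div 2"] vertex_colour_le[of "Suc (k div 2)"]
  by (cases "vertex_colour (k div 2) = 0") (auto simp: total_colour_def elim!: oddE)

lemma total_colour_no_odd_shift:
  assumes "even m" "odd p"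
    and "total_colour m = total_colour (m+p)" "total_colour (Suc m) = total_colour (Suc m + p)"
  shows False
proof -
  let ?a = "m div 2" and ?b = "(m+p) div 2"
  have vertex_edge: "vertex_colour ?a = edge_colour ?b"
    and edge_vertex: "edge_colour ?a = vertex_colour (Suc ?b)"
    using assms by (auto simp: total_colour_def elim!: evenE oddE)
  have "vertex_colour ?b = 0"
    using vertex_edge edge_colour_high[of ?b] vertex_colour_le[of ?a] by fastforce
  hence "vertex_colour ?a \<noteq> 0" using vertex_edge edge_colour_low[of ?b] by simp
  thus False using edge_vertex edge_colour_high[of ?a] vertex_colour_le[of "Suc ?b"] by simp
qed

lemma square_free_total_colour: "square_free_seq total_colour"
proof (rule square_free_seqI)
  fix i p :: nat assume "0 < p" and eq: "\<forall>j<p. total_colour (i+j) = total_colour (i+p+j)"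
  show False
  proof (cases "even p")
    case True
    then obtain q where p: "p = 2*q" by blast
    define f where "f = (if even i then vertex_colour else edge_colour)"
    have f: "total_colour (i + 2*l) = f (i div 2 + l)" for l
      by (simp add: total_colour_def f_def ac_simps)
    have "square_free_seq f"
      by (simp add: f_def square_free_vertex_colour square_free_edge_colour)
    moreover have "\<forall>l<q. f (i div 2 + l) = f (i div 2 + q + l)"
    proof (intro allI impI)
      fix l assume "l < q"
      with eq[rule_format, of "2*l"] f[of l] f[of "q+l"]
      show "f (i div 2 + l) = f (i div 2 + q + l)" by (simp add: p add.assoc)
    qed
    ultimately show False using square_free_seqD[of f q "i div 2"] \<open>0 < p\<close> p by auto
  next
    case False
    show False
    proof (cases "p = 1")
      case True
      thus False using eq[rule_format, of 0] total_colour_Suc_neq[of i] by simp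
    next
      case False
      with \<open>odd p\<close> have "2 < p" by presburger
      define j where "j = i mod 2"
      have "j \<le> 1" "even (i + j)" unfolding j_def by presburger+
      thus False
        using total_colour_no_odd_shift[of "i + j" p] eq[rule_format, of j] eq[rule_format, of "Suc j"]
          \<open>odd p\<close> \<open>2 < p\<close> by (simp add: algebra_simps)
    qed
  qed
qed

lemma nonrep_rev [simp]: "nonrep (rev s) = nonrep s"
proof -
  have "nonrep s" if "nonrep (rev s)" for s :: "'a list"
    using that unfolding nonrep_def by (metis append_assoc rev_append rev_is_Nil_conv)
  from this[of s] this[of "rev s"] show ?thesis by auto
qed

lemma path_edges_Nil [simp]: "path_edges [] = []"
  and path_edges_single [simp]: "path_edges [v] = []"
  and path_edges_Cons_Cons [simp]: "path_edges (v # w # vs) = {v, w} # path_edges (w # vs)"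
  by (simp_all add: path_edges_def)

lemma path_edges_snoc: "vs \<noteq> [] \<Longrightarrow> path_edges (vs @ [w]) = path_edges vs @ [{last vs, w}]"
  by (induction vs rule: induct_list012) auto

lemma total_seq_snoc:
  "vs \<noteq> [] \<Longrightarrow> total_seq cv ce (vs @ [w]) = total_seq cv ce vs @ [ce {last vs, w}, cv w]"
  by (induction vs rule: induct_list012) auto

lemma path_edges_rev: "path_edges (rev vs) = rev (path_edges vs)"
proof (induction vs rule: induct_list012)
  case (3 v w vs)
  have "path_edges (rev (v # w # vs)) = path_edges (rev (w # vs) @ [v])" by simp
  also have "\<dots> = path_edges (rev (w # vs)) @ [{w, v}]" by (subst path_edges_snoc) simp_all
  finally show ?case using "3.IH"(2) by (simp add: insert_commute)
qed simp_all

lemma total_seq_rev: "total_seq cv ce (rev vs) = rev (total_seq cv ce vs)"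
proof (induction vs rule: induct_list012)
  case (3 v w vs)
  have "total_seq cv ce (rev (v # w # vs)) = total_seq cv ce (rev (w # vs) @ [v])" by simp
  also have "\<dots> = total_seq cv ce (rev (w # vs)) @ [ce {w, v}, cv v]"
    by (subst total_seq_snoc) simp_all
  finally show ?case using "3.IH"(2) by (simp add: insert_commute)
qed simp_all

lemma interval_if_unit_steps:
  assumes "vs \<noteq> []" "distinct vs" "successively (\<lambda>x y. y = Suc x \<or> x = Suc y) vs"
  shows "\<exists>a L. vs = [a..<a + Suc L] \<or> vs = rev [a..<a + Suc L]"
  using assms
proof (induction vs rule: induct_list012)
  case (2 v)
  have "[v] = [v..<v + Suc 0]" by simp
  thus ?case by blast
next
  case (3 v w ws)
  then obtain a L where ws: "w # ws = [a..<a + Suc L] \<or> w # ws = rev [a..<a + Suc L]"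
    by auto
  have fresh: "v \<notin> set (w # ws)" and step: "w = Suc v \<or> v = Suc w"
    using "3.prems" by auto
  from ws show ?case
  proof
    assume up: "w # ws = [a..<a + Suc L]"
    hence w: "w = a" by (simp add: upt_conv_Cons del: upt_Suc)
    from step show ?thesis
    proof
      assume "w = Suc v"
      with up w have "v # w # ws = v # [Suc v..<Suc v + Suc L]" by simp
      also have "\<dots> = [v..<v + Suc (Suc L)]" by (simp add: upt_conv_Cons del: upt_Suc)
      finally show ?thesis by blast
    next
      assume "v = Suc w"
      moreover have "v \<notin> set [a..<a + Suc L]" using up fresh by simp
      ultimately have "L = 0" using w by simp
      with up w \<open>v = Suc w\<close> have "v # w # ws = rev [a..<a + Suc (Suc 0)]" by simp
      thus ?thesis by blast
    qed
  next
    assume down: "w # ws = rev [a..<a + Suc L]"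
    hence w: "w = a + L" by simp
    from step show ?thesis
    proof
      assume "w = Suc v"
      with down w fresh have "L = 0" by auto
      with down have "ws = []" by simp
      with \<open>w = Suc v\<close> have "v # w # ws = [v..<v + Suc (Suc 0)]" by simp
      thus ?thesis by blast
    next
      assume "v = Suc w"
      with down w have "v # w # ws = rev [a..<a + Suc (Suc L)]" by simp
      thus ?thesis by blast
    qed
  qed
qed simp

lemma path_graph_path_interval:
  assumes "is_path (path_V n) (path_E n) vs"
  shows "\<exists>a L. vs = [a..<a + Suc L] \<or> vs = rev [a..<a + Suc L]"
proof (rule interval_if_unit_steps)
  show "successively (\<lambda>x y. y = Suc x \<or> x = Suc y) vs"
    unfolding successively_conv_nth
  proof (intro allI impI)
    fix i assume "Suc i < length vs"
    hence "{vs ! i, vs ! Suc i} \<in> path_E n" using assms unfolding is_path_def by blast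
    thus "vs ! Suc i = Suc (vs ! i) \<or> vs ! i = Suc (vs ! Suc i)"
      unfolding path_E_def by (auto simp: doubleton_eq_iff)
  qed
qed (use assms in \<open>simp_all add: is_path_def\<close>)

definition path_edge_colour :: "nat set \<Rightarrow> nat" where
  "path_edge_colour e = edge_colour (Min e)"

lemma path_edge_colour_Suc [simp]: "path_edge_colour {k, Suc k} = edge_colour k"
  by (simp add: path_edge_colour_def)

lemma total_seq_upt:
  "total_seq vertex_colour path_edge_colour [a..<a + Suc L] =
     map total_colour [2*a..<2*a + Suc (2*L)]"
proof (induction L arbitrary: a)
  case (Suc L)
  have "[a..<a + Suc (Suc L)] = a # Suc a # [Suc (Suc a)..<Suc a + Suc L]"
    "[2*a..<2*a + Suc (2*Suc L)] = 2*a # Suc (2*a) # [2*Suc a..<2*Suc a + Suc (2*L)]"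
    by (simp_all add: upt_conv_Cons del: upt_Suc)
  with Suc[of "Suc a"] show ?case
    by (simp add: upt_conv_Cons total_colour_def del: upt_Suc)
qed (simp add: total_colour_def)

lemma path_edges_upt:
  "map path_edge_colour (path_edges [a..<a + Suc L]) = map edge_colour [a..<a + L]"
proof (induction L arbitrary: a)
  case (Suc L)
  have "[a..<a + Suc (Suc L)] = a # Suc a # [Suc (Suc a)..<Suc a + Suc L]"
    "[a..<a + Suc L] = a # [Suc a..<Suc a + L]"
    by (simp_all add: upt_conv_Cons del: upt_Suc)
  with Suc[of "Suc a"] show ?case
    by (simp add: upt_conv_Cons del: upt_Suc)
qed simp

lemma total_thue_path_graph_5: "total_thue (path_V n) (path_E n) vertex_colour path_edge_colour 5"
  unfolding total_thue_def
proof (intro conjI ballI allI impI)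
  fix v show "vertex_colour v < 5" using vertex_colour_le[of v] by simp
next
  fix e show "path_edge_colour e < 5" by (simp add: path_edge_colour_def edge_colour_less)
next
  fix vs assume "is_path (path_V n) (path_E n) vs"
  then obtain a L where vs: "vs = [a..<a + Suc L] \<or> vs = rev [a..<a + Suc L]"
    using path_graph_path_interval by blast
  have "nonrep (total_seq vertex_colour path_edge_colour [a..<a + Suc L])"
    "nonrep (map vertex_colour [a..<a + Suc L])"
    "nonrep (map path_edge_colour (path_edges [a..<a + Suc L]))"
    unfolding total_seq_upt path_edges_upt
    by (simp_all only: nonrep_map_upt square_free_total_colour square_free_vertex_colour
        square_free_edge_colour)
  with vs show "nonrep (total_seq vertex_colour path_edge_colour vs)"
    "nonrep (map vertex_colour vs)" "nonrep (map path_edge_colour (path_edges vs))"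
    by (auto simp only: total_seq_rev path_edges_rev rev_map[symmetric] nonrep_rev)
qed

lemma nonrep_square_block:
  assumes "nonrep s" "0 < p" "i + 2*p \<le> length s"
  shows "take p (drop i s) \<noteq> take p (drop (i + p) s)"
proof
  assume "take p (drop i s) = take p (drop (i + p) s)"
  moreover have "s = take i s @ take p (drop i s) @ take p (drop (i + p) s) @ drop (i + p + p) s"
    using assms(3) by (metis append_take_drop_id drop_drop add.commute)
  moreover have "take p (drop i s) \<noteq> []" using assms(2,3) by simp
  ultimately show False using assms(1) unfolding nonrep_def by metis
qed

lemma no_total_thue_word_3_colours:
  fixes c0 c1 c2 c3 e0 e1 e2 :: nat
  assumes "c0 < 3" "c1 < 3" "c2 < 3" "c3 < 3" "e0 < 3" "e1 < 3" "e2 < 3"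
    and total: "nonrep [c0, e0, c1, e1, c2, e2, c3]"
    and vertices: "nonrep [c0, c1, c2, c3]" and edges: "nonrep [e0, e1, e2]"
  shows False
proof -
  note block = nonrep_square_block
  have "c0 \<noteq> e0" "e0 \<noteq> c1" "c1 \<noteq> e1" "e1 \<noteq> c2" "c2 \<noteq> e2" "e2 \<noteq> c3"
    using block[OF total, of 1 0] block[OF total, of 1 1] block[OF total, of 1 2]
      block[OF total, of 1 3] block[OF total, of 1 4] block[OF total, of 1 5] by simp_all
  moreover have "\<not> (c0 = c1 \<and> e0 = e1)" "\<not> (e0 = e1 \<and> c1 = c2)"
    "\<not> (c1 = c2 \<and> e1 = e2)" "\<not> (e1 = e2 \<and> c2 = c3)"
    using block[OF total, of 2 0] block[OF total, of 2 1] block[OF total, of 2 2]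
      block[OF total, of 2 3] by simp_all
  moreover have "\<not> (c0 = e1 \<and> e0 = c2 \<and> c1 = e2)" "\<not> (e0 = c2 \<and> c1 = e2 \<and> e1 = c3)"
    using block[OF total, of 3 0] block[OF total, of 3 1] by simp_all
  moreover have "c0 \<noteq> c1" "c1 \<noteq> c2" "c2 \<noteq> c3" "\<not> (c0 = c2 \<and> c1 = c3)"
    using block[OF vertices, of 1 0] block[OF vertices, of 1 1] block[OF vertices, of 1 2]
      block[OF vertices, of 2 0] by simp_all
  moreover have "e0 \<noteq> e1" "e1 \<noteq> e2"
    using block[OF edges, of 1 0] block[OF edges, of 1 1] by simp_all
  moreover have three: "x < 3 \<Longrightarrow> x = 0 \<or> x = 1 \<or> x = 2" for x :: nat by auto
  ultimately show False
    using three[OF assms(1)] three[OF assms(2)] three[OF assms(3)] three[OF assms(4)]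
      three[OF assms(5)] three[OF assms(6)] three[OF assms(7)]
    by (elim disjE) simp_all
qed

lemma path_graph_edge: "Suc i < n \<Longrightarrow> {i, Suc i} \<in> path_E n"
  unfolding path_E_def by blast

lemma is_path_path_graph_upt: "m \<le> n \<Longrightarrow> 0 < m \<Longrightarrow> is_path (path_V n) (path_E n) [0..<m]"
  unfolding is_path_def by (auto simp: path_V_def path_graph_edge)

lemma total_thue_path_graph_ge_4:
  assumes thue: "total_thue (path_V n) (path_E n) cv ce k" and "4 \<le> n"
  shows "4 \<le> k"
proof (rule ccontr)
  assume "\<not> 4 \<le> k"
  have "is_path (path_V n) (path_E n) [0, 1, 2, 3]"
    using is_path_path_graph_upt[of 4 n] \<open>4 \<le> n\<close> by (simp add: upt_rec numeral_eq_Suc)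
  with thue have "nonrep [cv 0, ce {0, 1}, cv 1, ce {1, 2}, cv 2, ce {2, 3}, cv 3]"
    "nonrep [cv 0, cv 1, cv 2, cv 3]" "nonrep [ce {0, 1}, ce {1, 2}, ce {2, 3}]"
    unfolding total_thue_def by auto
  moreover have "cv v < 3" if "v < 4" for v
  proof -
    have "v \<in> path_V n" using that \<open>4 \<le> n\<close> by (simp add: path_V_def)
    with thue have "cv v < k" unfolding total_thue_def by blast
    with \<open>\<not> 4 \<le> k\<close> show ?thesis by simp
  qed
  moreover have "ce {i, Suc i} < 3" if "i < 3" for i
  proof -
    have "{i, Suc i} \<in> path_E n" using that \<open>4 \<le> n\<close> by (simp add: path_graph_edge)
    with thue have "ce {i, Suc i} < k" unfolding total_thue_def by blast
    with \<open>\<not> 4 \<le> k\<close> show ?thesis by simp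
  qed
  ultimately show False
    using no_total_thue_word_3_colours
      [of "cv 0" "cv 1" "cv 2" "cv 3" "ce {0, 1}" "ce {1, 2}" "ce {2, 3}"]
    by (simp add: numeral_eq_Suc)
qed

theorem theorem14:
  fixes n :: nat
  assumes "n \<ge> 4"
  shows "4 \<le> total_thue_number (path_V n) (path_E n) \<and> total_thue_number (path_V n) (path_E n) \<le> 5"
proof -
  let ?colourable = "\<lambda>k. \<exists>cv ce. total_thue (path_V n) (path_E n) cv ce k"
  have five: "?colourable 5" using total_thue_path_graph_5 by blast
  then obtain cv ce where "total_thue (path_V n) (path_E n) cv ce (Least ?colourable)"
    using LeastI[of ?colourable, OF five] by blast
  hence "4 \<le> Least ?colourable" using total_thue_path_graph_ge_4 assms by blast
  moreover have "Least ?colourable \<le> 5" using five by (rule Least_le)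
  ultimately show ?thesis unfolding total_thue_number_def by blast
qed

end
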